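(* Let $\lambda$ be a prime number, $\mathsf{R}$ a commutative ring and $f=\sum_{k=1}^t a_k\mathbf{x}^{\mathbf{e}_k}\in\mathsf{R}[x_1,\ldots,x_n]$, and suppose that a fixed term of $f$ avoids collision in the image $f(z^{s_1},\ldots,z^{s_n})$ for a uniformly random $\mathbf{s}\in\{0,\ldots,\lambda-1\}^n$ with probability at least $3/4$. Let $\mathbf{r}_1,\ldots,\mathbf{r}_{2n}$ be row vectors chosen independently and uniformly at random from $\{0,\ldots,\lambda-1\}^n$, and let $Q$ be the $2n\times n$ matrix with rows $\mathbf{r}_1,\ldots,\mathbf{r}_{2n}$. Then, conditioned on the event that this term of $f$ avoids collision in all of the images $f(z^{r_{i1}},\ldots,z^{r_{in}})$ for $1\le i\le 2n$, the matrix $Q$ has rank less than $n$ with probability at most $(9\lambda/16)^{-n}$.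
   Context: The $a_k$ are nonzero and the exponent vectors $\mathbf{e}_k\in\mathbb{Z}_{\ge0}^n$ pairwise distinct. The $i$th term of $f$ avoids collision under $\mathbf{s}$ if $\mathbf{e}_i\cdot\mathbf{s}\ne\mathbf{e}_j\cdot\mathbf{s}$ for all $j\ne i$. *)

theory Defs
  imports Main "Jordan_Normal_Form.DL_Rank"
begin

text \<open>Exponent vectors and substitution vectors in \<open>\<nat>^n\<close> are functions
  \<open>nat \<Rightarrow> nat\<close> of which only the entries at \<open>0..<n\<close> matter.\<close>

definition dotp :: "nat \<Rightarrow> (nat \<Rightarrow> nat) \<Rightarrow> (nat \<Rightarrow> nat) \<Rightarrow> nat" where
  "dotp n e s = (\<Sum>j<n. e j * s j)"

definition avoids_collision ::
  "nat \<Rightarrow> nat \<Rightarrow> (nat \<Rightarrow> nat \<Rightarrow> nat) \<Rightarrow> nat \<Rightarrow> (nat \<Rightarrow> nat) \<Rightarrow> bool" where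
  "avoids_collision n t e i s \<longleftrightarrow> (\<forall>j<t. j \<noteq> i \<longrightarrow> dotp n (e i) s \<noteq> dotp n (e j) s)"

definition row_matrix :: "nat \<Rightarrow> (nat \<Rightarrow> nat \<Rightarrow> nat) \<Rightarrow> real mat" where
  "row_matrix n r = mat (2 * n) n (\<lambda>(i, j). real (r i j))"

end

theory Submission
  imports Defs "HOL-Number_Theory.Cong"
begin

text \<open>If the real matrix \<open>Q\<close> with entries in \<open>{0..<\<lambda>}\<close> has rank less than \<open>n\<close>, it has a
  nonzero integer kernel vector; dividing out powers of \<open>\<lambda>\<close> and reducing modulo \<open>\<lambda>\<close> gives a
  nonzero \<open>v\<close> in \<open>{0..<\<lambda>}^n\<close> orthogonal to every row modulo \<open>\<lambda>\<close>. For fixed \<open>v\<close> the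
  orthogonal hyperplane has \<open>\<lambda>^(n-1)\<close> points, so a union bound over the \<open>\<lambda>^n\<close> choices of
  \<open>v\<close> bounds the number of rank-deficient \<open>Q\<close> by \<open>\<lambda>^n \<lambda>^(2n(n-1))\<close>, whereas at least
  \<open>(3\<lambda>^n/4)^(2n)\<close> matrices have all rows avoiding collision; the quotient is \<open>(9\<lambda>/16)^(-n)\<close>.\<close>

lemma mult_unit_vec_col:
  fixes A :: "'a :: semiring_1 mat"
  assumes "A \<in> carrier_mat n nc" and "i < nc"
  shows "A *\<^sub>v unit_vec nc i = col A i"
  using assms by (intro eq_vecI) auto

lemma (in vec_space) rank_deficient_kernel:
  assumes A: "A \<in> carrier_mat n nc" and rank: "rank A < nc"
  obtains v where "v \<in> carrier_vec nc" "v \<noteq> 0\<^sub>v nc" "A *\<^sub>v v = 0\<^sub>v n"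
proof (cases "distinct (cols A)")
  case True
  with A rank have "lin_dep (set (cols A))"
    using lin_indpt_full_rank by fastforce
  with A True show thesis using lin_depE that by blast
next
  case False
  then obtain i j where ij: "i \<noteq> j" "i < nc" "j < nc" "col A i = col A j"
    using A by (auto simp: distinct_conv_nth)
  define v :: "'a vec" where "v = unit_vec nc i - unit_vec nc j"
  have v: "v \<in> carrier_vec nc" by (simp add: v_def)
  have "v $ i = 1" using ij by (simp add: v_def)
  then have "v \<noteq> 0\<^sub>v nc" using ij by auto
  moreover have "A *\<^sub>v v = 0\<^sub>v n"
  proof -
    have "A *\<^sub>v v = A *\<^sub>v unit_vec nc i - A *\<^sub>v unit_vec nc j"
      unfolding v_def using A by (simp add: mult_minus_distrib_mat_vec)
    also have "\<dots> = col A i - col A j"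
      using A ij by (simp add: mult_unit_vec_col)
    also have "\<dots> = 0\<^sub>v n" using A ij by auto
    finally show ?thesis .
  qed
  ultimately show thesis using v that by blast
qed

lemma gram_kernel_imp_kernel:
  fixes A :: "'a :: linordered_idom mat"
  assumes A: "A \<in> carrier_mat m n" and w: "w \<in> carrier_vec n"
    and gram: "(transpose_mat A * A) *\<^sub>v w = 0\<^sub>v n"
  shows "A *\<^sub>v w = 0\<^sub>v m"
proof -
  define y where "y = A *\<^sub>v w"
  have y: "y \<in> carrier_vec m" using A w by (simp add: y_def)
  have "y \<bullet> y = (transpose_mat A *\<^sub>v y) \<bullet> w"
    using transpose_vec_mult_scalar[OF A w y] by (simp add: y_def)
  also have "transpose_mat A *\<^sub>v y = 0\<^sub>v n"
    using gram A w by (simp add: y_def assoc_mult_mat_vec[of _ n m _ n])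
  finally have "(\<Sum>k\<in>{0..<m}. y $ k * y $ k) = 0"
    using w y by (simp add: scalar_prod_def)
  then have "\<forall>k\<in>{0..<m}. y $ k * y $ k = 0"
    by (subst sum_nonneg_eq_0_iff[symmetric]) auto
  then show ?thesis using y by (auto simp: y_def[symmetric])
qed

text \<open>The real kernel vector only serves to make \<open>det (C\<^sup>T C)\<close> vanish; that determinant is an
  integer, so \<open>C\<^sup>T C\<close> has an integer kernel vector, which lies in the kernel of \<open>C\<close>.\<close>

lemma int_kernel_of_real_kernel:
  fixes C :: "int mat" and v :: "real vec"
  assumes C: "C \<in> carrier_mat m n"
    and v: "v \<in> carrier_vec n" "v \<noteq> 0\<^sub>v n" "map_mat real_of_int C *\<^sub>v v = 0\<^sub>v m"
  obtains u where "u \<in> carrier_vec n" "u \<noteq> 0\<^sub>v n" "C *\<^sub>v u = 0\<^sub>v m"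
proof -
  define G where "G = transpose_mat C * C"
  have G: "G \<in> carrier_mat n n" using C by (simp add: G_def)
  let ?CR = "map_mat real_of_int C"
  have CR: "?CR \<in> carrier_mat m n" using C by simp
  have "map_mat real_of_int G = transpose_mat ?CR * ?CR"
    unfolding G_def using C by (simp add: of_int_hom.mat_hom_mult[of _ n m] map_mat_transpose)
  then have "map_mat real_of_int G *\<^sub>v v = transpose_mat ?CR *\<^sub>v (?CR *\<^sub>v v)"
    using CR v by (simp add: assoc_mult_mat_vec[of _ n m _ n])
  also have "\<dots> = 0\<^sub>v n" using CR v by (intro eq_vecI) auto
  finally have "det (map_mat real_of_int G) = 0"
    using det_0_iff_vec_prod_zero_field[of "map_mat real_of_int G" n] G v by auto
  then have "det G = 0" by simp
  then obtain u where u: "u \<in> carrier_vec n" "u \<noteq> 0\<^sub>v n" "G *\<^sub>v u = 0\<^sub>v n"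
    using det_0_iff_vec_prod_zero[OF G] by blast
  show thesis using gram_kernel_imp_kernel[OF C u(1)] u that by (simp add: G_def)
qed

lemma int_kernel_not_all_dvd:
  fixes C :: "int mat" and p :: int
  assumes C: "C \<in> carrier_mat m n" and p: "1 < p"
  shows "u \<in> carrier_vec n \<Longrightarrow> u \<noteq> 0\<^sub>v n \<Longrightarrow> C *\<^sub>v u = 0\<^sub>v m \<Longrightarrow>
    \<exists>u' \<in> carrier_vec n. C *\<^sub>v u' = 0\<^sub>v m \<and> (\<exists>j<n. \<not> p dvd u' $ j)"
proof (induction "\<Sum>j<n. nat \<bar>u $ j\<bar>" arbitrary: u rule: less_induct)
  case less
  show ?case
  proof (cases "\<forall>j<n. p dvd u $ j")
    case False
    with less.prems show ?thesis by blast
  next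
    case True
    define u' where "u' = vec n (\<lambda>j. u $ j div p)"
    have u'_carrier: "u' \<in> carrier_vec n" by (simp add: u'_def)
    have u: "u = p \<cdot>\<^sub>v u'"
      using True less.prems(1) by (intro eq_vecI) (auto simp: u'_def)
    have ker: "C *\<^sub>v u' = 0\<^sub>v m"
    proof (rule eq_vecI)
      fix k assume k: "k < dim_vec (0\<^sub>v m)"
      then have "p * (C *\<^sub>v u') $ k = (C *\<^sub>v u) $ k" using C u'_carrier by (simp add: u)
      then show "(C *\<^sub>v u') $ k = 0\<^sub>v m $ k" using less.prems(3) p k by simp
    qed (use C in simp)
    have "\<exists>j<n. u' $ j \<noteq> 0"
      using less.prems(2) u'_carrier unfolding u by (auto simp: vec_eq_iff)
    then obtain j where j: "j < n" "u' $ j \<noteq> 0" by blast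
    have "(\<Sum>j<n. nat \<bar>u' $ j\<bar>) < (\<Sum>j<n. nat \<bar>u $ j\<bar>)"
    proof (rule sum_strict_mono_ex1)
      have scale: "\<bar>u $ l\<bar> = p * \<bar>u' $ l\<bar>" if "l < n" for l
        using that p u'_carrier by (simp add: u abs_mult)
      have "nat \<bar>u' $ l\<bar> \<le> nat \<bar>u $ l\<bar>" if "l < n" for l
        using scale[OF that] p mult_right_mono[of 1 p "\<bar>u' $ l\<bar>"] by simp
      moreover have "nat \<bar>u' $ j\<bar> < nat \<bar>u $ j\<bar>"
        using scale[OF j(1)] p j(2) mult_strict_right_mono[of 1 p "\<bar>u' $ j\<bar>"] by simp
      ultimately show "\<forall>l\<in>{..<n}. nat \<bar>u' $ l\<bar> \<le> nat \<bar>u $ l\<bar>"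
        and "\<exists>l\<in>{..<n}. nat \<bar>u' $ l\<bar> < nat \<bar>u $ l\<bar>"
        using j(1) by auto
    qed simp
    moreover have "u' \<noteq> 0\<^sub>v n" using j by auto
    ultimately show ?thesis using less.hyps u'_carrier ker by blast
  qed
qed

lemma mod_kernel_of_int_kernel:
  fixes c :: "nat \<Rightarrow> nat \<Rightarrow> nat" and u :: "int vec"
  assumes p: "0 < p" and u: "u \<in> carrier_vec n"
    and ker: "mat m n (\<lambda>(k, j). int (c k j)) *\<^sub>v u = 0\<^sub>v m"
    and j: "j < n" "\<not> int p dvd u $ j"
  shows "\<exists>v \<in> {0..<n} \<rightarrow>\<^sub>E {0..<p}. (\<exists>j<n. v j \<noteq> 0) \<and> (\<forall>k<m. p dvd dotp n (c k) v)"
proof -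
  define v where "v = restrict (\<lambda>j. nat (u $ j mod int p)) {0..<n}"
  have "v \<in> {0..<n} \<rightarrow>\<^sub>E {0..<p}"
    using p by (auto simp: v_def nat_less_iff)
  moreover have "v j \<noteq> 0"
    using j p by (simp add: v_def dvd_eq_mod_eq_0 nat_eq_iff)
  moreover have "p dvd dotp n (c k) v" if k: "k < m" for k
  proof -
    have "int (dotp n (c k) v) = (\<Sum>l<n. int (c k l) * (u $ l mod int p))"
      using p by (simp add: dotp_def v_def)
    also have "[\<dots> = (\<Sum>l<n. int (c k l) * u $ l)] (mod int p)"
      by (intro cong_sum cong_mult cong_refl) (simp add: cong_def)
    also have "(\<Sum>l<n. int (c k l) * u $ l) = 0"
      using arg_cong[OF ker, of "\<lambda>x. x $ k"] k u
      by (simp add: scalar_prod_def lessThan_atLeast0 row_def)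
    finally show ?thesis by (simp add: cong_0_iff)
  qed
  ultimately show ?thesis using j(1) by blast
qed

lemma rank_deficient_row_matrix_mod_kernel:
  assumes p: "prime p" and rank: "vec_space.rank (2*n) (row_matrix n r) < n"
  shows "\<exists>v \<in> {0..<n} \<rightarrow>\<^sub>E {0..<p}. (\<exists>j<n. v j \<noteq> 0) \<and> (\<forall>k<2*n. p dvd dotp n (r k) v)"
proof -
  define C where "C = mat (2*n) n (\<lambda>(k, j). int (r k j))"
  have C: "C \<in> carrier_mat (2*n) n" by (simp add: C_def)
  have "row_matrix n r = map_mat real_of_int C"
    by (rule eq_matI) (auto simp: row_matrix_def C_def)
  with rank have "vec_space.rank (2*n) (map_mat real_of_int C) < n" by simp
  then obtain v where "v \<in> carrier_vec n" "v \<noteq> 0\<^sub>v n" "map_mat real_of_int C *\<^sub>v v = 0\<^sub>v (2*n)"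
    using vec_space.rank_deficient_kernel[of "map_mat real_of_int C"] C by auto
  then obtain u where "u \<in> carrier_vec n" "u \<noteq> 0\<^sub>v n" "C *\<^sub>v u = 0\<^sub>v (2*n)"
    using int_kernel_of_real_kernel[OF C] by blast
  moreover have "1 < int p" using p prime_gt_1_nat by simp
  ultimately obtain u' j where "u' \<in> carrier_vec n" "C *\<^sub>v u' = 0\<^sub>v (2*n)" "j < n" "\<not> int p dvd u' $ j"
    using int_kernel_not_all_dvd[OF C] by blast
  then show ?thesis
    using mod_kernel_of_int_kernel[of p u' n "2*n" r j] p prime_gt_0_nat by (simp add: C_def)
qed

lemma mod_hyperplane_coordinate_determined:
  assumes p: "prime p" and v: "v \<in> {0..<n} \<rightarrow>\<^sub>E {0..<p}" and j0: "j0 < n" "v j0 \<noteq> 0"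
    and s: "s \<in> {0..<n} \<rightarrow>\<^sub>E {0..<p}" "p dvd dotp n s v"
    and s': "s' \<in> {0..<n} \<rightarrow>\<^sub>E {0..<p}" "p dvd dotp n s' v"
    and agree: "\<And>j. j < n \<Longrightarrow> j \<noteq> j0 \<Longrightarrow> s j = s' j"
  shows "s j0 = s' j0"
proof -
  define rest where "rest = (\<Sum>j\<in>{..<n} - {j0}. s j * v j)"
  have "dotp n s v = s j0 * v j0 + rest" and "dotp n s' v = s' j0 * v j0 + rest"
    using j0 agree by (simp_all add: dotp_def rest_def sum.remove)
  with s s' have "[s j0 * v j0 + rest = s' j0 * v j0 + rest] (mod p)"
    by (metis cong_0_iff cong_sym cong_trans)
  then have "[s j0 * v j0 = s' j0 * v j0] (mod p)" by (simp add: cong_add_rcancel_nat)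
  moreover have "v j0 < p" using v j0(1) by auto
  then have "\<not> p dvd v j0"
    using j0(2) by (auto dest: dvd_imp_le)
  then have "coprime (v j0) p"
    using p by (simp add: prime_imp_coprime_nat coprime_commute)
  ultimately have "[s j0 = s' j0] (mod p)" by (simp add: cong_mult_rcancel_nat)
  moreover have "s j0 < p" "s' j0 < p" using s(1) s'(1) j0(1) by auto
  ultimately show ?thesis by (rule cong_less_modulus_unique_nat)
qed

lemma card_mod_hyperplane_le:
  assumes p: "prime p" and v: "v \<in> {0..<n} \<rightarrow>\<^sub>E {0..<p}" and j0: "j0 < n" "v j0 \<noteq> 0"
  shows "card {s \<in> {0..<n} \<rightarrow>\<^sub>E {0..<p}. p dvd dotp n s v} \<le> p ^ (n - 1)"
proof -
  let ?H = "{s \<in> {0..<n} \<rightarrow>\<^sub>E {0..<p}. p dvd dotp n s v}"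
  let ?D = "{0..<n} - {j0}"
  have "inj_on (\<lambda>s. restrict s ?D) ?H"
  proof (rule inj_onI)
    fix s s' assume s: "s \<in> ?H" and s': "s' \<in> ?H" and eq: "restrict s ?D = restrict s' ?D"
    have agree: "s j = s' j" if "j < n" "j \<noteq> j0" for j
      using fun_cong[OF eq, of j] that by simp
    with mod_hyperplane_coordinate_determined[OF p v j0] s s' have "s j0 = s' j0" by blast
    show "s = s'"
    proof (rule PiE_ext)
      show "s \<in> {0..<n} \<rightarrow>\<^sub>E {0..<p}" "s' \<in> {0..<n} \<rightarrow>\<^sub>E {0..<p}" using s s' by auto
      show "s j = s' j" if "j \<in> {0..<n}" for j
        using that agree \<open>s j0 = s' j0\<close> by (cases "j = j0") auto
    qed
  qed
  moreover have "(\<lambda>s. restrict s ?D) ` ?H \<subseteq> ?D \<rightarrow>\<^sub>E {0..<p}"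
    by (rule image_subsetI) (auto simp: restrict_PiE_iff PiE_iff)
  ultimately have "card ?H \<le> card (?D \<rightarrow>\<^sub>E {0..<p})"
    by (intro card_inj_on_le) (auto simp: finite_PiE)
  also have "\<dots> = p ^ (n - 1)" using j0 by (simp add: card_PiE)
  finally show ?thesis .
qed

lemma card_rank_deficient_row_matrices_le:
  assumes p: "prime p"
  shows "card {r \<in> {0..<2*n} \<rightarrow>\<^sub>E ({0..<n} \<rightarrow>\<^sub>E {0..<p}). vec_space.rank (2*n) (row_matrix n r) < n}
    \<le> p ^ n * (p ^ (n - 1)) ^ (2*n)"
proof -
  let ?F = "{0..<n} \<rightarrow>\<^sub>E {0..<p}"
  define H where "H v = {s \<in> ?F. p dvd dotp n s v}" for v
  define V where "V = {v \<in> ?F. \<exists>j<n. v j \<noteq> 0}"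
  have finV: "finite V" by (simp add: V_def finite_PiE)
  have "{r \<in> {0..<2*n} \<rightarrow>\<^sub>E ?F. vec_space.rank (2*n) (row_matrix n r) < n}
      \<subseteq> (\<Union>v\<in>V. {0..<2*n} \<rightarrow>\<^sub>E H v)"
  proof
    fix r assume r: "r \<in> {r \<in> {0..<2*n} \<rightarrow>\<^sub>E ?F. vec_space.rank (2*n) (row_matrix n r) < n}"
    then obtain v where v: "v \<in> ?F" "\<exists>j<n. v j \<noteq> 0" "\<forall>k<2*n. p dvd dotp n (r k) v"
      using rank_deficient_row_matrix_mod_kernel[OF p, of n r] by auto
    then have "r \<in> {0..<2*n} \<rightarrow>\<^sub>E H v" using r by (auto simp: H_def PiE_iff)
    with v show "r \<in> (\<Union>v\<in>V. {0..<2*n} \<rightarrow>\<^sub>E H v)" by (auto simp: V_def)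
  qed
  then have "card {r \<in> {0..<2*n} \<rightarrow>\<^sub>E ?F. vec_space.rank (2*n) (row_matrix n r) < n}
      \<le> card (\<Union>v\<in>V. {0..<2*n} \<rightarrow>\<^sub>E H v)"
    by (rule card_mono[rotated]) (simp add: finV H_def finite_PiE)
  also have "\<dots> \<le> (\<Sum>v\<in>V. card ({0..<2*n} \<rightarrow>\<^sub>E H v))" by (rule card_UN_le[OF finV])
  also have "\<dots> \<le> (\<Sum>v\<in>V. (p ^ (n - 1)) ^ (2*n))"
  proof (rule sum_mono)
    fix v assume "v \<in> V"
    then have "card (H v) \<le> p ^ (n - 1)"
      using card_mod_hyperplane_le[OF p] unfolding V_def H_def by blast
    then show "card ({0..<2*n} \<rightarrow>\<^sub>E H v) \<le> (p ^ (n - 1)) ^ (2*n)"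
      by (simp add: card_PiE power_mono)
  qed
  also have "\<dots> \<le> card ?F * (p ^ (n - 1)) ^ (2*n)"
    using card_mono[of ?F V] by (simp add: V_def finite_PiE)
  also have "card ?F = p ^ n" by (simp add: card_PiE)
  finally show ?thesis .
qed

lemma rank_deficiency_bound_identity:
  assumes "0 < p"
  shows "real p ^ n * (real p ^ (n - 1)) ^ (2*n)
    = (9 * real p / 16) powr (- real n) * (3 / 4 * real p ^ n) ^ (2*n)"
proof -
  let ?x = "real p"
  have exps: "n * (2*n) = n + n + (n - 1) * (2*n)" by (cases n) auto
  have "(3 / 4 * ?x ^ n) ^ (2*n) = (3 / 4) ^ (2*n) * (?x ^ n) ^ (2*n)"
    by (rule power_mult_distrib)
  also have "(3 / 4 :: real) ^ (2*n) = (9 / 16) ^ n"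
    unfolding power_mult by (simp add: power2_eq_square)
  also have "(?x ^ n) ^ (2*n) = ?x ^ n * ?x ^ n * (?x ^ (n - 1)) ^ (2*n)"
    by (simp only: power_mult[symmetric] exps power_add)
  also have "(9 / 16) ^ n * (?x ^ n * ?x ^ n * (?x ^ (n - 1)) ^ (2*n))
      = (9 / 16 * ?x) ^ n * (?x ^ n * (?x ^ (n - 1)) ^ (2*n))"
    by (simp only: power_mult_distrib mult_ac)
  finally have "(3 / 4 * ?x ^ n) ^ (2*n) = (9 * ?x / 16) ^ n * (?x ^ n * (?x ^ (n - 1)) ^ (2*n))"
    by simp
  then show ?thesis
    using assms by (simp add: powr_minus powr_realpow)
qed

theorem lemma5p3:
  fixes lam n t i :: nat
    and a :: "nat \<Rightarrow> 'r::comm_ring_1"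
    and e :: "nat \<Rightarrow> nat \<Rightarrow> nat"
  assumes "prime lam"
    and "\<forall>k<t. a k \<noteq> 0"
    and "\<forall>k<t. \<forall>l<t. k \<noteq> l \<longrightarrow> (\<exists>j<n. e k j \<noteq> e l j)"
    and "i < t"
    and "real (card {s \<in> {0..<n} \<rightarrow>\<^sub>E {0..<lam}. avoids_collision n t e i s})
           \<ge> 3 / 4 * real lam ^ n"
  shows "real (card {r \<in> {0..<2*n} \<rightarrow>\<^sub>E ({0..<n} \<rightarrow>\<^sub>E {0..<lam}).
                (\<forall>k<2*n. avoids_collision n t e i (r k)) \<and>
                vec_space.rank (2*n) (row_matrix n r) < n})
         \<le> (9 * real lam / 16) powr (- real n) *
           real (card {r \<in> {0..<2*n} \<rightarrow>\<^sub>E ({0..<n} \<rightarrow>\<^sub>E {0..<lam}).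
                (\<forall>k<2*n. avoids_collision n t e i (r k))})"
proof -
  let ?F = "{0..<n} \<rightarrow>\<^sub>E {0..<lam}"
  define S where "S = {s \<in> ?F. avoids_collision n t e i s}"
  have avoiding: "{r \<in> {0..<2*n} \<rightarrow>\<^sub>E ?F. \<forall>k<2*n. avoids_collision n t e i (r k)}
      = {0..<2*n} \<rightarrow>\<^sub>E S"
    by (auto simp: S_def PiE_iff extensional_def)
  have "card {r \<in> {0..<2*n} \<rightarrow>\<^sub>E ?F. (\<forall>k<2*n. avoids_collision n t e i (r k)) \<and>
                vec_space.rank (2*n) (row_matrix n r) < n}
      \<le> card {r \<in> {0..<2*n} \<rightarrow>\<^sub>E ?F. vec_space.rank (2*n) (row_matrix n r) < n}"
    by (intro card_mono) (auto simp: finite_PiE)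
  also have "\<dots> \<le> lam ^ n * (lam ^ (n - 1)) ^ (2*n)"
    by (rule card_rank_deficient_row_matrices_le[OF assms(1)])
  finally have "real (card {r \<in> {0..<2*n} \<rightarrow>\<^sub>E ?F. (\<forall>k<2*n. avoids_collision n t e i (r k)) \<and>
                vec_space.rank (2*n) (row_matrix n r) < n})
      \<le> real lam ^ n * (real lam ^ (n - 1)) ^ (2*n)"
    by (simp flip: of_nat_power of_nat_mult)
  also have "\<dots> = (9 * real lam / 16) powr (- real n) * (3 / 4 * real lam ^ n) ^ (2*n)"
    by (rule rank_deficiency_bound_identity[OF prime_gt_0_nat[OF assms(1)]])
  also have "\<dots> \<le> (9 * real lam / 16) powr (- real n) * real (card S) ^ (2*n)"
    using assms(5) by (intro mult_left_mono power_mono) (simp_all add: S_def)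
  also have "real (card S) ^ (2*n) = real (card ({0..<2*n} \<rightarrow>\<^sub>E S))"
    by (simp add: card_PiE)
  finally show ?thesis by (simp only: avoiding)
qed

end
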